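(* For all types $A$, $B$, $C$: if $A \equiv C$, $C \equiv B$, $A \simeq C$ and $C \simeq B$, then $A \simeq B$.
   Context: Types and rows share one grammar: $A,B,C,\rho ::= X \mid \alpha \mid \star \mid \iota \mid A\to B \mid \forall X{:}K.\,A \mid [\rho] \mid \langle\rho\rangle \mid \cdot \mid \ell{:}A;\rho$, where $X$ ranges over type variables (bound by $\forall$), $\alpha$ over type names, $\star$ is the dynamic type (also serving as the dynamic row), $\iota$ over base types, $[\rho]$ and $\langle\rho\rangle$ are record and variant types, $\cdot$ is the empty row, $\ell$ ranges over labels, and $K\in\{\mathsf T,\mathsf R\}$ is a kind. Types are identified up to renaming of bound variables; $\mathit{ftv}(A)$ is the set of free type variables. Row matching $\rho \triangleright_\ell A,\rho'$ is defined by: $(\ell{:}A;\rho)\triangleright_\ell A,\rho$; if $\ell'\neq\ell$ and $\rho\triangleright_\ell A,\rho'$ then $(\ell'{:}B;\rho)\triangleright_\ell A,(\ell'{:}B;\rho')$; and $\star\triangleright_\ell \star,\star$. $\mathbf{QPoly}(A)$ holds iff $A$ is not of the form $\forall X{:}K.\,B$ and $\star$ occurs in $A$. Type equivalence $\equiv$ is the least equivalence relation that is a congruence for $\to$, $\forall X{:}K.\,-$, $[-]$, $\langle-\rangle$ and $\ell{:}-;-$, and contains $\ell{:}A;\ell'{:}B;\rho \equiv \ell'{:}B;\ell{:}A;\rho$ whenever $\ell\neq\ell'$. Consistency $\simeq$ is defined inductively: $A\simeq A$; $\star\simeq A$; $A\simeq\star$; $A_1\to A_2\simeq B_1\to B_2$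 if $A_1\simeq B_1$ and $A_2\simeq B_2$; $\forall X{:}K.A\simeq\forall X{:}K.B$ if $A\simeq B$; $\forall X{:}K.A\simeq B$ if $\mathbf{QPoly}(B)$, $X\notin\mathit{ftv}(B)$ and $A\simeq B$; $A\simeq\forall X{:}K.B$ if $\mathbf{QPoly}(A)$, $X\notin\mathit{ftv}(A)$ and $A\simeq B$; $[\rho_1]\simeq[\rho_2]$ and $\langle\rho_1\rangle\simeq\langle\rho_2\rangle$ if $\rho_1\simeq\rho_2$; $\ell{:}A;\rho_1\simeq B$ if $B\triangleright_\ell B',\rho_2$, $A\simeq B'$ and $\rho_1\simeq\rho_2$; $A\simeq \ell{:}B;\rho_2$ if $A\triangleright_\ell A',\rho_1$, $A'\simeq B$ and $\rho_1\simeq\rho_2$. *)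

theory Defs
  imports Main
begin

text \<open>Types and rows share one grammar. Bound type variables X are represented
by de Bruijn indices (so types are identified up to renaming of bound variables);
'n ranges over type names, 'b over base types, 'l over labels.\<close>

datatype kind = KT | KR

datatype ('n, 'b, 'l) ty =
    TVar nat
  | TName 'n
  | Dyn
  | Base 'b
  | Fun "('n, 'b, 'l) ty" "('n, 'b, 'l) ty"
  | All kind "('n, 'b, 'l) ty"
  | Record "('n, 'b, 'l) ty"
  | Variant "('n, 'b, 'l) ty"
  | REmpty
  | RCons 'l "('n, 'b, 'l) ty" "('n, 'b, 'l) ty"

fun lift :: "nat \<Rightarrow> ('n, 'b, 'l) ty \<Rightarrow> ('n, 'b, 'l) ty" where
  "lift k (TVar i) = (if i < k then TVar i else TVar (Suc i))"
| "lift k (TName a) = TName a"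
| "lift k Dyn = Dyn"
| "lift k (Base b) = Base b"
| "lift k (Fun A B) = Fun (lift k A) (lift k B)"
| "lift k (All K A) = All K (lift (Suc k) A)"
| "lift k (Record r) = Record (lift k r)"
| "lift k (Variant r) = Variant (lift k r)"
| "lift k REmpty = REmpty"
| "lift k (RCons l A r) = RCons l (lift k A) (lift k r)"

fun ftv_at :: "nat \<Rightarrow> ('n, 'b, 'l) ty \<Rightarrow> nat set" where
  "ftv_at k (TVar i) = (if i < k then {} else {i - k})"
| "ftv_at k (TName a) = {}"
| "ftv_at k Dyn = {}"
| "ftv_at k (Base b) = {}"
| "ftv_at k (Fun A B) = ftv_at k A \<union> ftv_at k B"
| "ftv_at k (All K A) = ftv_at (Suc k) A"
| "ftv_at k (Record r) = ftv_at k r"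
| "ftv_at k (Variant r) = ftv_at k r"
| "ftv_at k REmpty = {}"
| "ftv_at k (RCons l A r) = ftv_at k A \<union> ftv_at k r"

abbreviation ftv :: "('n, 'b, 'l) ty \<Rightarrow> nat set" where
  "ftv \<equiv> ftv_at 0"

fun has_dyn :: "('n, 'b, 'l) ty \<Rightarrow> bool" where
  "has_dyn Dyn = True"
| "has_dyn (Fun A B) = (has_dyn A \<or> has_dyn B)"
| "has_dyn (All K A) = has_dyn A"
| "has_dyn (Record r) = has_dyn r"
| "has_dyn (Variant r) = has_dyn r"
| "has_dyn (RCons l A r) = (has_dyn A \<or> has_dyn r)"
| "has_dyn _ = False"

definition QPoly :: "('n, 'b, 'l) ty \<Rightarrow> bool" where
  "QPoly A \<longleftrightarrow> (\<nexists>K B. A = All K B) \<and> has_dyn A"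

inductive rmatch :: "('n, 'b, 'l) ty \<Rightarrow> 'l \<Rightarrow> ('n, 'b, 'l) ty \<Rightarrow> ('n, 'b, 'l) ty \<Rightarrow> bool" where
  rm_head: "rmatch (RCons l A r) l A r"
| rm_skip: "l' \<noteq> l \<Longrightarrow> rmatch r l A r' \<Longrightarrow> rmatch (RCons l' B r) l A (RCons l' B r')"
| rm_dyn: "rmatch Dyn l Dyn Dyn"

inductive tyeq :: "('n, 'b, 'l) ty \<Rightarrow> ('n, 'b, 'l) ty \<Rightarrow> bool" (infix "\<equiv>\<^sub>t" 50) where
  eq_refl: "A \<equiv>\<^sub>t A"
| eq_sym: "A \<equiv>\<^sub>t B \<Longrightarrow> B \<equiv>\<^sub>t A"
| eq_trans: "A \<equiv>\<^sub>t B \<Longrightarrow> B \<equiv>\<^sub>t C \<Longrightarrow> A \<equiv>\<^sub>t C"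
| eq_fun: "A1 \<equiv>\<^sub>t B1 \<Longrightarrow> A2 \<equiv>\<^sub>t B2 \<Longrightarrow> Fun A1 A2 \<equiv>\<^sub>t Fun B1 B2"
| eq_all: "A \<equiv>\<^sub>t B \<Longrightarrow> All K A \<equiv>\<^sub>t All K B"
| eq_rec: "A \<equiv>\<^sub>t B \<Longrightarrow> Record A \<equiv>\<^sub>t Record B"
| eq_var: "A \<equiv>\<^sub>t B \<Longrightarrow> Variant A \<equiv>\<^sub>t Variant B"
| eq_rcons: "A \<equiv>\<^sub>t B \<Longrightarrow> r1 \<equiv>\<^sub>t r2 \<Longrightarrow> RCons l A r1 \<equiv>\<^sub>t RCons l B r2"
| eq_swap: "l \<noteq> l' \<Longrightarrow> RCons l A (RCons l' B r) \<equiv>\<^sub>t RCons l' B (RCons l A r)"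

text \<open>In the quasi-polymorphic rules, the side condition
\<open>X \<notin> ftv(B)\<close> together with \<open>A \<simeq> B\<close> (with X free in A) is rendered in
de Bruijn form by comparing the body A with B weakened by one binder.\<close>
inductive consistent :: "('n, 'b, 'l) ty \<Rightarrow> ('n, 'b, 'l) ty \<Rightarrow> bool" (infix "\<simeq>" 50) where
  c_refl: "A \<simeq> A"
| c_dynL: "Dyn \<simeq> A"
| c_dynR: "A \<simeq> Dyn"
| c_fun: "A1 \<simeq> B1 \<Longrightarrow> A2 \<simeq> B2 \<Longrightarrow> Fun A1 A2 \<simeq> Fun B1 B2"
| c_all: "A \<simeq> B \<Longrightarrow> All K A \<simeq> All K B"
| c_allL: "QPoly B \<Longrightarrow> A \<simeq> lift 0 B \<Longrightarrow> All K A \<simeq> B"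
| c_allR: "QPoly A \<Longrightarrow> lift 0 A \<simeq> B \<Longrightarrow> A \<simeq> All K B"
| c_rec: "r1 \<simeq> r2 \<Longrightarrow> Record r1 \<simeq> Record r2"
| c_var: "r1 \<simeq> r2 \<Longrightarrow> Variant r1 \<simeq> Variant r2"
| c_rowL: "rmatch B l B' r2 \<Longrightarrow> A \<simeq> B' \<Longrightarrow> r1 \<simeq> r2 \<Longrightarrow> RCons l A r1 \<simeq> B"
| c_rowR: "rmatch A l A' r1 \<Longrightarrow> A' \<simeq> B \<Longrightarrow> r1 \<simeq> r2 \<Longrightarrow> A \<simeq> RCons l B r2"

end

theory Submission
  imports Defs
begin

text \<open>By transitivity \<open>A \<equiv>\<^sub>t B\<close>, so it suffices that equivalent types are consistent. Consistency is not transitive, so this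
cannot be shown by induction on \<open>\<equiv>\<^sub>t\<close> directly. Instead one shows that \<open>\<equiv>\<^sub>t\<close> is a bisimulation
for the observations made by \<open>\<simeq>\<close>: equivalent non-row types have the same head constructor
with equivalent components, and every row match of one of two equivalent types is answered
by a match of the other with equivalent field type and rest. Consistency then follows by
structural induction on the left type, using \<open>c_rowL\<close> for rows.\<close>

fun is_atom :: "('n, 'b, 'l) ty \<Rightarrow> bool" where
  "is_atom (TVar i) = True"
| "is_atom (TName a) = True"
| "is_atom Dyn = True"
| "is_atom (Base b) = True"
| "is_atom REmpty = True"
| "is_atom _ = False"

fun is_rcons :: "('n, 'b, 'l) ty \<Rightarrow> bool" where
  "is_rcons (RCons l A r) = True"
| "is_rcons _ = False"

inductive same_head :: "(('n, 'b, 'l) ty \<Rightarrow> ('n, 'b, 'l) ty \<Rightarrow> bool) \<Rightarrow>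
    ('n, 'b, 'l) ty \<Rightarrow> ('n, 'b, 'l) ty \<Rightarrow> bool" for R where
  sh_atom: "is_atom A \<Longrightarrow> same_head R A A"
| sh_fun: "R A1 B1 \<Longrightarrow> R A2 B2 \<Longrightarrow> same_head R (Fun A1 A2) (Fun B1 B2)"
| sh_all: "R A B \<Longrightarrow> same_head R (All K A) (All K B)"
| sh_rec: "R A B \<Longrightarrow> same_head R (Record A) (Record B)"
| sh_var: "R A B \<Longrightarrow> same_head R (Variant A) (Variant B)"

lemma same_head_refl: "(\<And>x. R x x) \<Longrightarrow> \<not> is_rcons A \<Longrightarrow> same_head R A A"
  by (cases A) (auto intro: same_head.intros)

lemma same_head_sym:
  assumes "symp R" and "same_head R A B"
  shows "same_head R B A"
  using assms(2) by cases (simp_all add: same_head.intros sympD[OF assms(1)])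

lemma same_head_trans:
  assumes "transp R" and "same_head R A B" and "same_head R B C"
  shows "same_head R A C"
  using assms(2,3)
  by (elim same_head.cases) (auto intro: same_head.intros transpD[OF assms(1)])

lemma same_head_not_rcons: "same_head R A B \<Longrightarrow> \<not> is_rcons A \<and> \<not> is_rcons B"
  by (induction rule: same_head.induct) (auto elim: is_atom.elims)

lemma tyeq_same_head_or_rcons:
  "A \<equiv>\<^sub>t B \<Longrightarrow> same_head (\<equiv>\<^sub>t) A B \<or> is_rcons A \<and> is_rcons B"
proof (induction rule: tyeq.induct)
  case (eq_refl A)
  show ?case using same_head_refl[of "(\<equiv>\<^sub>t)", OF tyeq.eq_refl] by blast
next
  case (eq_sym A B)
  have "symp (\<equiv>\<^sub>t)" by (blast intro: sympI tyeq.eq_sym)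
  with eq_sym.IH show ?case using same_head_sym by blast
next
  case (eq_trans A B C)
  have "transp (\<equiv>\<^sub>t)" by (blast intro: transpI tyeq.eq_trans)
  with eq_trans.IH show ?case using same_head_trans same_head_not_rcons by metis
qed (simp_all add: same_head.intros)

lemma tyeq_same_head: "A \<equiv>\<^sub>t B \<Longrightarrow> \<not> is_rcons A \<Longrightarrow> same_head (\<equiv>\<^sub>t) A B"
  using tyeq_same_head_or_rcons by blast

definition rmatch_sim :: "('n, 'b, 'l) ty \<Rightarrow> ('n, 'b, 'l) ty \<Rightarrow> bool" where
  "rmatch_sim A B \<longleftrightarrow>
    (\<forall>l A' r. rmatch A l A' r \<longrightarrow> (\<exists>B' r'. rmatch B l B' r' \<and> A' \<equiv>\<^sub>t B' \<and> r \<equiv>\<^sub>t r'))"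

lemma rmatch_sim_refl: "rmatch_sim A A"
  unfolding rmatch_sim_def by (blast intro: eq_refl)

lemma rmatch_sim_trans:
  assumes "rmatch_sim A B" and "rmatch_sim B C"
  shows "rmatch_sim A C"
  unfolding rmatch_sim_def
proof (intro allI impI)
  fix l X Y
  assume "rmatch A l X Y"
  then obtain X1 Y1 where "rmatch B l X1 Y1" "X \<equiv>\<^sub>t X1" "Y \<equiv>\<^sub>t Y1"
    using assms(1) unfolding rmatch_sim_def by blast
  moreover from this(1) obtain X2 Y2 where "rmatch C l X2 Y2" "X1 \<equiv>\<^sub>t X2" "Y1 \<equiv>\<^sub>t Y2"
    using assms(2) unfolding rmatch_sim_def by blast
  ultimately show "\<exists>X' Y'. rmatch C l X' Y' \<and> X \<equiv>\<^sub>t X' \<and> Y \<equiv>\<^sub>t Y'"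
    using eq_trans by blast
qed

lemma rmatch_sim_rcons:
  assumes "A \<equiv>\<^sub>t B" and "r1 \<equiv>\<^sub>t r2" and "rmatch_sim r1 r2"
  shows "rmatch_sim (RCons l A r1) (RCons l B r2)"
  unfolding rmatch_sim_def
proof (intro allI impI)
  fix l' X Y
  assume "rmatch (RCons l A r1) l' X Y"
  then show "\<exists>X' Y'. rmatch (RCons l B r2) l' X' Y' \<and> X \<equiv>\<^sub>t X' \<and> Y \<equiv>\<^sub>t Y'"
  proof (cases rule: rmatch.cases)
    case rm_head
    then show ?thesis using assms(1,2) by (auto intro: rmatch.rm_head)
  next
    case (rm_skip Y1)
    then obtain X' Y1' where "rmatch r2 l' X' Y1'" "X \<equiv>\<^sub>t X'" "Y1 \<equiv>\<^sub>t Y1'"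
      using assms(3) unfolding rmatch_sim_def by blast
    then show ?thesis using rm_skip assms(1) by (blast intro: rmatch.rm_skip eq_rcons)
  qed
qed

lemma rmatch_sim_swap:
  assumes "l1 \<noteq> l2"
  shows "rmatch_sim (RCons l1 A1 (RCons l2 A2 r)) (RCons l2 A2 (RCons l1 A1 r))"
  unfolding rmatch_sim_def
proof (intro allI impI)
  fix l X Y
  assume "rmatch (RCons l1 A1 (RCons l2 A2 r)) l X Y"
  then show "\<exists>X' Y'. rmatch (RCons l2 A2 (RCons l1 A1 r)) l X' Y' \<and> X \<equiv>\<^sub>t X' \<and> Y \<equiv>\<^sub>t Y'"
  proof (cases rule: rmatch.cases)
    case rm_head
    then show ?thesis using assms by (blast intro: rmatch.intros eq_refl)
  next
    case (rm_skip Y1)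
    from \<open>rmatch (RCons l2 A2 r) l X Y1\<close> show ?thesis
    proof (cases rule: rmatch.cases)
      case rm_head
      then show ?thesis using rm_skip by (blast intro: rmatch.intros eq_refl)
    next
      case (rm_skip Y2)
      then show ?thesis using \<open>l1 \<noteq> l\<close> \<open>Y = RCons l1 A1 Y1\<close>
        by (blast intro: rmatch.intros eq_refl eq_swap[OF assms])
    qed
  qed
qed

lemma rmatch_sim_nonrow: "\<not> is_rcons A \<Longrightarrow> A \<noteq> Dyn \<Longrightarrow> rmatch_sim A B"
  unfolding rmatch_sim_def by (auto elim: rmatch.cases)

lemma tyeq_rmatch_sim: "A \<equiv>\<^sub>t B \<Longrightarrow> rmatch_sim A B \<and> rmatch_sim B A"
proof (induction rule: tyeq.induct)
  case (eq_trans A B C)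
  then show ?case using rmatch_sim_trans[of A B C] rmatch_sim_trans[of C B A] by blast
next
  case (eq_rcons A B r1 r2 l)
  from eq_rcons.IH(2) show ?case
    using rmatch_sim_rcons[OF eq_rcons.hyps]
      rmatch_sim_rcons[OF eq_sym[OF eq_rcons.hyps(1)] eq_sym[OF eq_rcons.hyps(2)]]
    by blast
next
  case (eq_swap l l' A B r)
  show ?case using rmatch_sim_swap[OF eq_swap] rmatch_sim_swap[OF not_sym[OF eq_swap]] by blast
qed (simp_all add: rmatch_sim_nonrow rmatch_sim_refl)

lemma tyeq_rmatch:
  assumes "A \<equiv>\<^sub>t B" and "rmatch A l A' r"
  shows "\<exists>B' r'. rmatch B l B' r' \<and> A' \<equiv>\<^sub>t B' \<and> r \<equiv>\<^sub>t r'"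
  using tyeq_rmatch_sim[OF assms(1)] assms(2) unfolding rmatch_sim_def by simp

lemma tyeq_atom:
  assumes "A \<equiv>\<^sub>t B" and "is_atom A"
  shows "B = A"
proof -
  have "same_head (\<equiv>\<^sub>t) A B"
    using tyeq_same_head[OF assms(1)] assms(2) by (cases A) simp_all
  then show ?thesis using assms(2) by cases auto
qed

lemma tyeq_consistent: "A \<equiv>\<^sub>t B \<Longrightarrow> A \<simeq> B"
proof (induction A arbitrary: B)
  case (Fun A1 A2)
  have "same_head (\<equiv>\<^sub>t) (Fun A1 A2) B" using Fun.prems by (simp add: tyeq_same_head)
  then obtain B1 B2 where "B = Fun B1 B2" "A1 \<equiv>\<^sub>t B1" "A2 \<equiv>\<^sub>t B2" by cases auto
  then show ?case using Fun.IH by (simp add: c_fun)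
next
  case (All K A)
  have "same_head (\<equiv>\<^sub>t) (All K A) B" using All.prems by (simp add: tyeq_same_head)
  then obtain A' where "B = All K A'" "A \<equiv>\<^sub>t A'" by cases auto
  then show ?case using All.IH by (simp add: c_all)
next
  case (Record r)
  have "same_head (\<equiv>\<^sub>t) (Record r) B" using Record.prems by (simp add: tyeq_same_head)
  then obtain r' where "B = Record r'" "r \<equiv>\<^sub>t r'" by cases auto
  then show ?case using Record.IH by (simp add: c_rec)
next
  case (Variant r)
  have "same_head (\<equiv>\<^sub>t) (Variant r) B" using Variant.prems by (simp add: tyeq_same_head)
  then obtain r' where "B = Variant r'" "r \<equiv>\<^sub>t r'" by cases auto
  then show ?case using Variant.IH by (simp add: c_var)
next
  case (RCons l A r)
  obtain B' r' where "rmatch B l B' r'" "A \<equiv>\<^sub>t B'" "r \<equiv>\<^sub>t r'"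
    using tyeq_rmatch[OF RCons.prems rm_head] by blast
  then show ?case using c_rowL RCons.IH by metis
qed (metis tyeq_atom is_atom.simps c_refl)+

theorem mainTheorem6:
  fixes A B C :: "('n, 'b, 'l) ty"
  assumes "A \<equiv>\<^sub>t C" and "C \<equiv>\<^sub>t B" and "A \<simeq> C" and "C \<simeq> B"
  shows "A \<simeq> B"
  using tyeq_consistent[OF eq_trans[OF assms(1,2)]] .

end
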